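(* Let $M,N,m,n$ be integers with $0\le m\le M$, $0\le n\le N$, let $\bm A$ be a real $2^m\times 2^n$ matrix and $\bm B$ a real $2^{M-m}\times 2^{N-n}$ matrix. Then for any integers $m',n'$ with $0\le m'\le M$, $0\le n'\le N$, $$\|\mathcal R_{m',n'}[\bm A\otimes\bm B]\|_S=\|\mathcal R_{m\wedge m',\,n\wedge n'}[\bm A]\|_S\cdot\|\mathcal R_{(m'-m)_+,\,(n'-n)_+}[\bm B]\|_S.$$
   Context: $\|\cdot\|_S$ is the spectral norm; $x_+=\max\{x,0\}$, $a\wedge b=\min\{a,b\}$. For a $p\times q$ matrix, $\mathrm{vec}$ stacks its rows into a $pq$-vector. Rearrangement: for a $2^a\times 2^b$ matrix $\bm C$ and integers $0\le k\le a$, $0\le l\le b$, view $\bm C$ as a $2^k\times 2^l$ array of blocks $\bm C_{i,j}$ each of size $2^{a-k}\times 2^{b-l}$; $\mathcal R_{k,l}[\bm C]$ is the $2^{k+l}\times 2^{a+b-k-l}$ matrix whose rows are $\mathrm{vec}(\bm C_{1,1})',\dots,\mathrm{vec}(\bm C_{1,2^l})',\dots,\mathrm{vec}(\bm C_{2^k,2^l})'$ (blocks in row-major order). Here $\bm A\otimes\bm B$ is $2^M\times 2^N$. *)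

theory Defs
  imports Complex_Main "Jordan_Normal_Form.Matrix"
begin

definition kron :: "real mat \<Rightarrow> real mat \<Rightarrow> real mat" where
  "kron A B = mat (dim_row A * dim_row B) (dim_col A * dim_col B)
     (\<lambda>(i, j). A $$ (i div dim_row B, j div dim_col B) * B $$ (i mod dim_row B, j mod dim_col B))"

text \<open>Rearrangement R_{k,l}[C]: C viewed as a 2^k x 2^l array of blocks C_{i,j} of size p x q
  (p = dim_row C / 2^k, q = dim_col C / 2^l); row number i*2^l + j of the result is
  vec(C_{i,j}), where vec stacks the rows, so its entry number r*q + c is C_{i,j}(r,c).\<close>
definition rearr :: "nat \<Rightarrow> nat \<Rightarrow> real mat \<Rightarrow> real mat" where
  "rearr k l C = (let p = dim_row C div 2 ^ k; q = dim_col C div 2 ^ l in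
     mat (2 ^ (k + l)) (p * q)
       (\<lambda>(t, u). C $$ ((t div 2 ^ l) * p + u div q, (t mod 2 ^ l) * q + u mod q)))"

definition vnorm :: "real vec \<Rightarrow> real" where
  "vnorm v = sqrt (\<Sum>i<dim_vec v. (v $ i)\<^sup>2)"

definition spec_norm :: "real mat \<Rightarrow> real" where
  "spec_norm A = Sup {vnorm (A *\<^sub>v x) | x. x \<in> carrier_vec (dim_col A) \<and> vnorm x = 1}"

end

theory Submission
  imports Defs
begin

text \<open>Index the rows of \<open>A \<otimes> B\<close> by binary words of length \<open>M\<close>: the leading \<open>m\<close> bits address a
  row of \<open>A\<close>, the remaining ones a row of \<open>B\<close>, and \<open>rearr m' n'\<close> moves the leading \<open>m'\<close> bits
  into the row index of the result (likewise for columns). Whether \<open>m' \<le> m\<close> or \<open>m' \<ge> m\<close>, the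
  cut never mixes bits of \<open>A\<close> and \<open>B\<close> inside one group, so the rearrangement of \<open>A \<otimes> B\<close> is
  \<open>R[A] \<otimes> R[B]\<close> up to permuting rows and columns: the permutation interchanges the two middle
  digits of a mixed-radix index. The spectral norm is invariant under such permutations and
  multiplicative on Kronecker products.\<close>

text \<open>Vectors are represented by their coefficient functions, so that reindexing by a bijection
  needs no conversion between vector lengths.\<close>

definition sqnorm :: "nat \<Rightarrow> (nat \<Rightarrow> real) \<Rightarrow> real" where
  "sqnorm n f = (\<Sum>j<n. (f j)\<^sup>2)"

definition sqnorm_mult :: "real mat \<Rightarrow> (nat \<Rightarrow> real) \<Rightarrow> real" where
  "sqnorm_mult C f = (\<Sum>i<dim_row C. (\<Sum>j<dim_col C. C $$ (i, j) * f j)\<^sup>2)"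

lemma sqnorm_nonneg: "sqnorm n f \<ge> 0"
  unfolding sqnorm_def by (simp add: sum_nonneg)

lemma sqnorm_mult_nonneg: "sqnorm_mult C f \<ge> 0"
  unfolding sqnorm_mult_def by (simp add: sum_nonneg)

lemma sqnorm_mult_cong: "(\<And>j. j < dim_col C \<Longrightarrow> f j = g j) \<Longrightarrow> sqnorm_mult C f = sqnorm_mult C g"
  unfolding sqnorm_mult_def by (auto intro!: sum.cong)

lemma sqnorm_divide: "sqnorm n (\<lambda>j. f j / s) = sqnorm n f / s\<^sup>2"
  unfolding sqnorm_def by (simp add: power_divide sum_divide_distrib)

lemma sqnorm_mult_divide: "sqnorm_mult C (\<lambda>j. f j / s) = sqnorm_mult C f / s\<^sup>2"
  unfolding sqnorm_mult_def by (simp add: sum_divide_distrib[symmetric] power_divide)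

lemma sqnorm_eq_0_iff: "sqnorm n f = 0 \<longleftrightarrow> (\<forall>j<n. f j = 0)"
  unfolding sqnorm_def by (auto simp: sum_nonneg_eq_0_iff)

lemma sqnorm_mult_le_entrywise:
  assumes "sqnorm (dim_col C) f = 1"
  shows "sqnorm_mult C f \<le> (\<Sum>i<dim_row C. (\<Sum>j<dim_col C. \<bar>C $$ (i, j)\<bar>)\<^sup>2)"
proof -
  have f_bound: "\<bar>f j\<bar> \<le> 1" if "j < dim_col C" for j
  proof -
    have "(f j)\<^sup>2 \<le> sqnorm (dim_col C) f"
      unfolding sqnorm_def using that by (intro member_le_sum) auto
    with assms show ?thesis by (simp add: abs_square_le_1)
  qed
  have "\<bar>\<Sum>j<dim_col C. C $$ (i, j) * f j\<bar> \<le> (\<Sum>j<dim_col C. \<bar>C $$ (i, j)\<bar>)" for i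
  proof -
    have "\<bar>\<Sum>j<dim_col C. C $$ (i, j) * f j\<bar> \<le> (\<Sum>j<dim_col C. \<bar>C $$ (i, j) * f j\<bar>)"
      by (rule sum_abs)
    also have "\<dots> \<le> (\<Sum>j<dim_col C. \<bar>C $$ (i, j)\<bar>)"
      using f_bound by (intro sum_mono) (auto simp: abs_mult intro: mult_left_le)
    finally show ?thesis .
  qed
  then show ?thesis
    unfolding sqnorm_mult_def
    by (intro sum_mono) (metis abs_le_square_iff abs_of_nonneg abs_ge_zero sum_nonneg)
qed

lemma spec_norm_eq_Sup_sqnorm:
  "spec_norm C = Sup {sqrt (sqnorm_mult C f) | f. sqnorm (dim_col C) f = 1}"
proof -
  have vnorm_eq: "vnorm x = sqrt (sqnorm (dim_col C) (\<lambda>j. x $ j))"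
    and vnorm_mult_eq: "vnorm (C *\<^sub>v x) = sqrt (sqnorm_mult C (\<lambda>j. x $ j))"
    if "x \<in> carrier_vec (dim_col C)" for x
    using that unfolding vnorm_def sqnorm_def sqnorm_mult_def
    by (auto simp: scalar_prod_def lessThan_atLeast0 intro!: sum.cong arg_cong[where f = sqrt])
  have "{vnorm (C *\<^sub>v x) | x. x \<in> carrier_vec (dim_col C) \<and> vnorm x = 1}
      = {sqrt (sqnorm_mult C f) | f. sqnorm (dim_col C) f = 1}" (is "?L = ?R")
  proof
    show "?L \<subseteq> ?R"
      using vnorm_eq vnorm_mult_eq by (fastforce simp: sqnorm_nonneg)
    show "?R \<subseteq> ?L"
    proof
      fix y assume "y \<in> ?R"
      then obtain f where f: "sqnorm (dim_col C) f = 1" "y = sqrt (sqnorm_mult C f)" by blast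
      define x where "x = vec (dim_col C) f"
      have "x \<in> carrier_vec (dim_col C)" "vnorm x = 1" "y = vnorm (C *\<^sub>v x)"
        using f vnorm_eq vnorm_mult_eq unfolding x_def
        by (auto cong: sqnorm_mult_cong simp: sqnorm_def)
      then show "y \<in> ?L" by blast
    qed
  qed
  then show ?thesis unfolding spec_norm_def by simp
qed

lemma bdd_above_sqnorm_mult: "bdd_above {sqrt (sqnorm_mult C f) | f. sqnorm (dim_col C) f = 1}"
  using sqnorm_mult_le_entrywise
  by (intro bdd_aboveI[of _ "sqrt (\<Sum>i<dim_row C. (\<Sum>j<dim_col C. \<bar>C $$ (i, j)\<bar>)\<^sup>2)"]) auto

lemma exists_sqnorm_eq_1:
  assumes "n > 0"
  shows "\<exists>f. sqnorm n f = 1"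
proof -
  have "sqnorm n (\<lambda>j. if j = 0 then 1 else 0) = (\<Sum>j<n. if j = 0 then 1 else 0)"
    unfolding sqnorm_def by (intro sum.cong) auto
  with assms show ?thesis by auto
qed

lemma sqnorm_mult_le_spec_norm:
  assumes "dim_col C > 0"
  shows "sqnorm_mult C f \<le> (spec_norm C)\<^sup>2 * sqnorm (dim_col C) f"
proof (cases "sqnorm (dim_col C) f = 0")
  case True
  then have "sqnorm_mult C f = sqnorm_mult C (\<lambda>_. 0)"
    by (intro sqnorm_mult_cong) (simp add: sqnorm_eq_0_iff)
  with True show ?thesis by (simp add: sqnorm_mult_def)
next
  case False
  define s where "s = sqrt (sqnorm (dim_col C) f)"
  have "sqnorm (dim_col C) f > 0"
    using False sqnorm_nonneg[of "dim_col C" f] by (simp add: less_le)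
  then have s: "s > 0" "s\<^sup>2 = sqnorm (dim_col C) f"
    unfolding s_def by auto
  with False have "sqnorm (dim_col C) (\<lambda>j. f j / s) = 1" by (simp add: sqnorm_divide)
  then have "sqrt (sqnorm_mult C f / s\<^sup>2) \<le> spec_norm C"
    unfolding spec_norm_eq_Sup_sqnorm sqnorm_mult_divide[symmetric]
    by (intro cSup_upper bdd_above_sqnorm_mult) blast
  then have "sqnorm_mult C f / s\<^sup>2 \<le> (spec_norm C)\<^sup>2"
    by (rule sqrt_le_D)
  then have "sqnorm_mult C f \<le> (spec_norm C)\<^sup>2 * s\<^sup>2"
    using s(1) by (simp add: pos_divide_le_eq)
  with s(2) show ?thesis by simp
qed

lemma spec_norm_nonneg: "dim_col C > 0 \<Longrightarrow> spec_norm C \<ge> 0"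
proof -
  assume "dim_col C > 0"
  then obtain f where "sqnorm (dim_col C) f = 1" using exists_sqnorm_eq_1 by blast
  then show ?thesis
    unfolding spec_norm_eq_Sup_sqnorm
    by (intro cSup_upper2[OF _ _ bdd_above_sqnorm_mult, of "sqrt (sqnorm_mult C f)"])
      (auto simp: sqnorm_mult_nonneg)
qed

lemma spec_norm_sq_le:
  assumes "dim_col C > 0" "c > 0" "K \<ge> 0"
    and bound: "\<And>f. c * sqnorm_mult C f \<le> K * sqnorm (dim_col C) f"
  shows "c * (spec_norm C)\<^sup>2 \<le> K"
proof -
  have "spec_norm C \<le> sqrt (K / c)"
    unfolding spec_norm_eq_Sup_sqnorm
  proof (rule cSup_least)
    show "{sqrt (sqnorm_mult C f) | f. sqnorm (dim_col C) f = 1} \<noteq> {}"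
      using exists_sqnorm_eq_1[OF assms(1)] by blast
    fix x assume "x \<in> {sqrt (sqnorm_mult C f) | f. sqnorm (dim_col C) f = 1}"
    then obtain f where "sqnorm (dim_col C) f = 1" "x = sqrt (sqnorm_mult C f)" by blast
    with bound[of f] \<open>c > 0\<close> show "x \<le> sqrt (K / c)"
      by (simp add: le_divide_eq mult.commute)
  qed
  then have "(spec_norm C)\<^sup>2 \<le> (sqrt (K / c))\<^sup>2"
    by (intro power_mono spec_norm_nonneg assms(1))
  with assms(2,3) have "(spec_norm C)\<^sup>2 \<le> K / c" by simp
  with \<open>c > 0\<close> show ?thesis by (simp add: le_divide_eq mult.commute)
qed

lemma spec_norm_reindex_le:
  assumes C: "C \<in> carrier_mat rc cc" and D: "D \<in> carrier_mat rd cd" and "cc > 0" "cd > 0"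
    and f: "bij_betw f {..<rc} {..<rd}" and g: "bij_betw g {..<cc} {..<cd}"
    and entries: "\<And>i j. i < rc \<Longrightarrow> j < cc \<Longrightarrow> C $$ (i, j) = D $$ (f i, g j)"
  shows "spec_norm C \<le> spec_norm D"
proof -
  define g' where "g' = inv_into {..<cc} g"
  have g': "g' (g j) = j" if "j < cc" for j
    unfolding g'_def using g that by (simp add: bij_betw_inv_into_left)
  have "1 * (spec_norm C)\<^sup>2 \<le> (spec_norm D)\<^sup>2"
  proof (rule spec_norm_sq_le)
    fix h
    have "sqnorm_mult C h = (\<Sum>i<rc. (\<Sum>j<cc. D $$ (f i, g j) * h (g' (g j)))\<^sup>2)"
      unfolding sqnorm_mult_def using C entries g' by (auto intro!: sum.cong)
    also have "\<dots> = (\<Sum>i<rc. (\<Sum>j<cd. D $$ (f i, j) * h (g' j))\<^sup>2)"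
      using sum.reindex_bij_betw[OF g, of "\<lambda>j. D $$ (f _, j) * h (g' j)"] by simp
    also have "\<dots> = (\<Sum>i<rd. (\<Sum>j<cd. D $$ (i, j) * h (g' j))\<^sup>2)"
      by (rule sum.reindex_bij_betw[OF f])
    finally have "sqnorm_mult C h = sqnorm_mult D (h \<circ> g')"
      unfolding sqnorm_mult_def using D by simp
    moreover have "sqnorm cc h = sqnorm cd (h \<circ> g')"
      unfolding sqnorm_def using g' sum.reindex_bij_betw[OF g, of "\<lambda>j. (h (g' j))\<^sup>2"] by simp
    ultimately show "1 * sqnorm_mult C h \<le> (spec_norm D)\<^sup>2 * sqnorm (dim_col C) h"
      using sqnorm_mult_le_spec_norm[of D "h \<circ> g'"] C D \<open>cd > 0\<close> by simp
  qed (use C \<open>cc > 0\<close> in auto)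
  with spec_norm_nonneg[of D] D \<open>cd > 0\<close> show ?thesis
    by (simp add: power2_le_iff_abs_le)
qed

lemma spec_norm_reindex:
  assumes C: "C \<in> carrier_mat rc cc" and D: "D \<in> carrier_mat rd cd" and "cc > 0" "cd > 0"
    and f: "bij_betw f {..<rc} {..<rd}" and g: "bij_betw g {..<cc} {..<cd}"
    and entries: "\<And>i j. i < rc \<Longrightarrow> j < cc \<Longrightarrow> C $$ (i, j) = D $$ (f i, g j)"
  shows "spec_norm C = spec_norm D"
proof (rule antisym)
  show "spec_norm C \<le> spec_norm D"
    using assms by (rule spec_norm_reindex_le)
  define f' where "f' = inv_into {..<rc} f"
  define g' where "g' = inv_into {..<cc} g"
  have f': "bij_betw f' {..<rd} {..<rc}" and g': "bij_betw g' {..<cd} {..<cc}"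
    unfolding f'_def g'_def using f g by (auto intro: bij_betw_inv_into)
  have "D $$ (i, j) = C $$ (f' i, g' j)" if "i < rd" "j < cd" for i j
  proof -
    have "f (f' i) = i" "g (g' j) = j"
      unfolding f'_def g'_def using f g that by (auto simp: bij_betw_inv_into_right)
    moreover have "f' i < rc" "g' j < cc"
      using f' g' that by (auto simp: bij_betw_def)
    ultimately show ?thesis using entries by metis
  qed
  then show "spec_norm D \<le> spec_norm C"
    by (rule spec_norm_reindex_le[OF D C \<open>cd > 0\<close> \<open>cc > 0\<close> f' g'])
qed

lemma mixed_radix_less:
  assumes "i < n" "j < m"
  shows "i * m + j < n * (m::nat)"
proof -
  have "i * m + j < Suc i * m" using \<open>j < m\<close> by simp
  also have "\<dots> \<le> n * m" using \<open>i < n\<close> by (intro mult_right_mono) auto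
  finally show ?thesis .
qed

lemma mixed_radix_cases:
  assumes "t < n * (m::nat)"
  obtains i j where "i < n" "j < m" "t = i * m + j"
proof
  from assms have "m > 0" by (cases m) auto
  then show "t mod m < m" by simp
  show "t div m < n" using assms by (simp add: less_mult_imp_div_less)
  show "t = t div m * m + t mod m" by simp
qed

lemma sum_mixed_radix: "(\<Sum>t<n * m. F t) = (\<Sum>i<n. \<Sum>j<m. F (i * m + (j::nat)))"
proof -
  have "sum F {i * m..<i * m + m} = (\<Sum>j<m. F (i * m + j))" for i
  proof -
    have "sum F {0 + i * m..<m + i * m} = (\<Sum>j\<in>{0..<m}. F (j + i * m))"
      by (rule sum.shift_bounds_nat_ivl)
    then show ?thesis by (simp add: add.commute lessThan_atLeast0)
  qed
  then show ?thesis by (simp add: sum.nat_group[symmetric])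
qed

lemma kron_carrier: "kron X Y \<in> carrier_mat (dim_row X * dim_row Y) (dim_col X * dim_col Y)"
  unfolding kron_def by simp

lemma kron_index:
  assumes "i < dim_row X" "k < dim_row Y" "j < dim_col X" "l < dim_col Y"
  shows "kron X Y $$ (i * dim_row Y + k, j * dim_col Y + l) = X $$ (i, j) * Y $$ (k, l)"
  unfolding kron_def using assms by (simp add: mixed_radix_less)

lemma sqnorm_mixed_radix: "sqnorm (n * m) v = (\<Sum>i<n. sqnorm m (\<lambda>j. v (i * m + j)))"
  unfolding sqnorm_def by (rule sum_mixed_radix)

lemma sqnorm_mult_kron:
  "sqnorm_mult (kron X Y) v = (\<Sum>i<dim_row X. \<Sum>k<dim_row Y.
      (\<Sum>j<dim_col X. \<Sum>l<dim_col Y. X $$ (i, j) * Y $$ (k, l) * v (j * dim_col Y + l))\<^sup>2)"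
  unfolding sqnorm_mult_def using kron_carrier[of X Y]
  by (simp add: sum_mixed_radix kron_index)

text \<open>Apply \<open>Y\<close> to each slice of \<open>v\<close>, then \<open>X\<close> across the slices.\<close>
lemma sqnorm_mult_kron_le:
  assumes "dim_col X > 0" "dim_col Y > 0"
  shows "sqnorm_mult (kron X Y) v
    \<le> (spec_norm X)\<^sup>2 * (spec_norm Y)\<^sup>2 * sqnorm (dim_col X * dim_col Y) v"
proof -
  define V where "V j l = v (j * dim_col Y + l)" for j l
  define W where "W j k = (\<Sum>l<dim_col Y. Y $$ (k, l) * V j l)" for j k
  have "sqnorm_mult (kron X Y) v = (\<Sum>i<dim_row X. \<Sum>k<dim_row Y. (\<Sum>j<dim_col X. X $$ (i, j) * W j k)\<^sup>2)"
    unfolding sqnorm_mult_kron W_def V_def by (simp add: sum_distrib_left mult.assoc)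
  also have "\<dots> = (\<Sum>k<dim_row Y. sqnorm_mult X (\<lambda>j. W j k))"
    unfolding sqnorm_mult_def by (rule sum.swap)
  also have "\<dots> \<le> (\<Sum>k<dim_row Y. (spec_norm X)\<^sup>2 * sqnorm (dim_col X) (\<lambda>j. W j k))"
    by (intro sum_mono sqnorm_mult_le_spec_norm assms)
  also have "\<dots> = (spec_norm X)\<^sup>2 * (\<Sum>j<dim_col X. sqnorm_mult Y (V j))"
    unfolding sqnorm_def sqnorm_mult_def W_def
    by (simp add: sum_distrib_left sum.swap[of _ "{..<dim_row Y}"])
  also have "\<dots> \<le> (spec_norm X)\<^sup>2 * (\<Sum>j<dim_col X. (spec_norm Y)\<^sup>2 * sqnorm (dim_col Y) (V j))"
    by (intro mult_left_mono sum_mono sqnorm_mult_le_spec_norm assms) simp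
  also have "\<dots> = (spec_norm X)\<^sup>2 * (spec_norm Y)\<^sup>2 * sqnorm (dim_col X * dim_col Y) v"
    unfolding sqnorm_mixed_radix V_def by (simp add: sum_distrib_left mult.assoc)
  finally show ?thesis .
qed

lemma sqnorm_mult_kron_product:
  "sqnorm_mult (kron X Y) (\<lambda>t. x (t div dim_col Y) * y (t mod dim_col Y))
    = sqnorm_mult X x * sqnorm_mult Y y"
proof -
  have "sqnorm_mult (kron X Y) (\<lambda>t. x (t div dim_col Y) * y (t mod dim_col Y)) =
    (\<Sum>i<dim_row X. \<Sum>k<dim_row Y.
      ((\<Sum>j<dim_col X. X $$ (i, j) * x j) * (\<Sum>l<dim_col Y. Y $$ (k, l) * y l))\<^sup>2)"
    unfolding sqnorm_mult_kron by (intro sum.cong refl) (simp add: sum_product mult_ac)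
  also have "\<dots> = sqnorm_mult X x * sqnorm_mult Y y"
    unfolding sqnorm_mult_def power_mult_distrib by (rule sum_product[symmetric])
  finally show ?thesis .
qed

lemma sqnorm_product:
  "sqnorm (n * m) (\<lambda>t. x (t div m) * y (t mod m)) = sqnorm n x * sqnorm m y"
  unfolding sqnorm_mixed_radix unfolding sqnorm_def
  by (simp add: power_mult_distrib sum_product)

text \<open>The lower bound tests \<open>X \<otimes> Y\<close> on product vectors \<open>x \<otimes> y\<close>; since the suprema need not
  be attained, the two factors are bounded one after the other.\<close>
lemma spec_norm_kron:
  assumes X: "dim_col X > 0" and Y: "dim_col Y > 0"
  shows "spec_norm (kron X Y) = spec_norm X * spec_norm Y"
proof -
  let ?k = "(spec_norm (kron X Y))\<^sup>2"
  have dim_K: "dim_col (kron X Y) = dim_col X * dim_col Y" and K: "dim_col (kron X Y) > 0"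
    using kron_carrier[of X Y] X Y by auto
  have "1 * ?k \<le> (spec_norm X)\<^sup>2 * (spec_norm Y)\<^sup>2"
    using sqnorm_mult_kron_le[OF X Y] by (intro spec_norm_sq_le K) (auto simp: dim_K)
  then have upper: "?k \<le> (spec_norm X * spec_norm Y)\<^sup>2"
    by (simp add: power_mult_distrib)
  have product: "sqnorm_mult X x * sqnorm_mult Y y \<le> ?k * (sqnorm (dim_col X) x * sqnorm (dim_col Y) y)"
    for x y
    using sqnorm_mult_le_spec_norm[OF K, of "\<lambda>t. x (t div dim_col Y) * y (t mod dim_col Y)"]
    unfolding dim_K sqnorm_mult_kron_product sqnorm_product .
  have X_bound: "sqnorm_mult Y y * (spec_norm X)\<^sup>2 \<le> ?k * sqnorm (dim_col Y) y" for y
  proof (cases "sqnorm_mult Y y = 0")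
    case True
    then show ?thesis by (simp add: sqnorm_nonneg)
  next
    case False
    with sqnorm_mult_nonneg[of Y y] have "sqnorm_mult Y y > 0" by simp
    with product[of _ y] show ?thesis
      by (intro spec_norm_sq_le X) (auto simp: sqnorm_nonneg mult_ac)
  qed
  have lower: "(spec_norm X * spec_norm Y)\<^sup>2 \<le> ?k"
  proof (cases "spec_norm X = 0")
    case True
    then show ?thesis by simp
  next
    case False
    then have "(spec_norm X)\<^sup>2 * (spec_norm Y)\<^sup>2 \<le> ?k"
      using X_bound by (intro spec_norm_sq_le Y) (auto simp: mult.commute)
    then show ?thesis by (simp add: power_mult_distrib)
  qed
  from upper lower have "?k = (spec_norm X * spec_norm Y)\<^sup>2" by simp
  then show ?thesis
    using spec_norm_nonneg[OF K] spec_norm_nonneg[OF X] spec_norm_nonneg[OF Y]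
    by (simp add: power2_eq_iff_nonneg)
qed

text \<open>Reading \<open>t\<close> as the mixed-radix numeral with digits \<open>(i, i', j, j')\<close> of bases \<open>(_, c, b, d)\<close>,
  i.e. \<open>t = (i * c + i') * (b * d) + (j * d + j')\<close>, the result has the digits \<open>(i, j, i', j')\<close>.\<close>
definition swap_middle_digits :: "nat \<Rightarrow> nat \<Rightarrow> nat \<Rightarrow> nat \<Rightarrow> nat" where
  "swap_middle_digits b c d t =
     (t div (b * d) div c * b + t mod (b * d) div d) * (c * d)
     + (t div (b * d) mod c * d + t mod (b * d) mod d)"

lemma swap_middle_digits:
  assumes "i' < c" "j < b" "j' < d"
  shows "swap_middle_digits b c d ((i * c + i') * (b * d) + (j * d + j'))
    = (i * b + j) * (c * d) + (i' * d + j')"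
proof -
  have "j * d + j' < b * d" using assms(2,3) by (rule mixed_radix_less)
  with assms show ?thesis by (simp add: swap_middle_digits_def)
qed

lemma mixed_radix_cases4:
  assumes "t < a * c * (b * d)"
  obtains i i' j j' where "i < a" "i' < c" "j < b" "j' < d"
    and "t = (i * c + i') * (b * d) + (j * d + (j'::nat))"
proof -
  from assms obtain u v where "u < a * c" "v < b * d" "t = u * (b * d) + v"
    by (rule mixed_radix_cases)
  with that show ?thesis
    by (metis mixed_radix_cases)
qed

lemma bij_swap_middle_digits:
  "bij_betw (swap_middle_digits b c d) {..<a * c * (b * d)} {..<a * b * (c * d)}"
proof (rule bij_betw_byWitness[where f' = "swap_middle_digits c b d"])
  show "\<forall>t\<in>{..<a * c * (b * d)}. swap_middle_digits c b d (swap_middle_digits b c d t) = t"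
    by (auto elim!: mixed_radix_cases4 simp: swap_middle_digits)
  show "\<forall>t\<in>{..<a * b * (c * d)}. swap_middle_digits b c d (swap_middle_digits c b d t) = t"
    by (auto elim!: mixed_radix_cases4 simp: swap_middle_digits)
  show "swap_middle_digits b c d ` {..<a * c * (b * d)} \<subseteq> {..<a * b * (c * d)}"
    by (auto elim!: mixed_radix_cases4 simp: swap_middle_digits intro!: mixed_radix_less)
  show "swap_middle_digits c b d ` {..<a * b * (c * d)} \<subseteq> {..<a * c * (b * d)}"
    by (auto elim!: mixed_radix_cases4 simp: swap_middle_digits intro!: mixed_radix_less)
qed

lemma rearr_carrier:
  assumes "C \<in> carrier_mat (2 ^ k * p) (2 ^ l * q)"
  shows "rearr k l C \<in> carrier_mat (2 ^ k * 2 ^ l) (p * q)"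
  using assms unfolding rearr_def Let_def by (simp add: power_add)

lemma rearr_index:
  assumes "C \<in> carrier_mat (2 ^ k * p) (2 ^ l * q)"
    and "i < 2 ^ k" "j < 2 ^ l" "r < p" "s < q"
  shows "rearr k l C $$ (i * 2 ^ l + j, r * q + s) = C $$ (i * p + r, j * q + s)"
  using assms unfolding rearr_def Let_def by (simp add: power_add mixed_radix_less)

text \<open>If \<open>c = 1\<close> then \<open>i' = 0\<close>, and if \<open>p = 1\<close> then \<open>r = 0\<close>: either way the index splits at
  the block boundary of the Kronecker product.\<close>
lemma block_index_regroup:
  assumes "c = 1 \<or> p = 1" "i' < c" "r < (p::nat)"
  shows "(i * c + i') * (p * p') + (r * p' + r') = (i * p + r) * (c * p') + (i' * p' + r')"
  using assms by (auto simp: algebra_simps)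

lemma rearr_kron_index:
  assumes A: "A \<in> carrier_mat (2 ^ a * p) (2 ^ b * q)" and B: "B \<in> carrier_mat (2 ^ c * p') (2 ^ d * q')"
    and rows: "c = 0 \<or> p = 1" and cols: "d = 0 \<or> q = 1"
    and i: "i < 2 ^ a" "i' < 2 ^ c" and j: "j < 2 ^ b" "j' < 2 ^ d"
    and r: "r < p" "r' < p'" and s: "s < q" "s' < q'"
  shows "rearr (a + c) (b + d) (kron A B) $$
           ((i * 2 ^ c + i') * (2 ^ b * 2 ^ d) + (j * 2 ^ d + j'), (r * p' + r') * (q * q') + (s * q' + s'))
       = kron (rearr a b A) (rearr c d B) $$
           ((i * 2 ^ b + j) * (2 ^ c * 2 ^ d) + (i' * 2 ^ d + j'), (r * q + s) * (p' * q') + (r' * q' + s'))"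
proof -
  have K: "kron A B \<in> carrier_mat (2 ^ (a + c) * (p * p')) (2 ^ (b + d) * (q * q'))"
    using kron_carrier[of A B] A B by (simp add: power_add mult_ac)
  have "i * 2 ^ c + i' < 2 ^ (a + c)" "j * 2 ^ d + j' < 2 ^ (b + d)"
    using mixed_radix_less i j by (auto simp: power_add)
  moreover have "r * p' + r' < p * p'" "s * q' + s' < q * q'"
    using mixed_radix_less r s by auto
  ultimately have "rearr (a + c) (b + d) (kron A B) $$
           ((i * 2 ^ c + i') * (2 ^ b * 2 ^ d) + (j * 2 ^ d + j'), (r * p' + r') * (q * q') + (s * q' + s'))
      = kron A B $$ ((i * 2 ^ c + i') * (p * p') + (r * p' + r'), (j * 2 ^ d + j') * (q * q') + (s * q' + s'))"
    using rearr_index[OF K] by (simp add: power_add)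
  also have "\<dots> = kron A B $$ ((i * p + r) * (2 ^ c * p') + (i' * p' + r'), (j * q + s) * (2 ^ d * q') + (j' * q' + s'))"
    using rows cols i j r s by (simp add: block_index_regroup)
  also have "\<dots> = A $$ (i * p + r, j * q + s) * B $$ (i' * p' + r', j' * q' + s')"
    using kron_index[of "i * p + r" A "i' * p' + r'" B] A B i j r s by (simp add: mixed_radix_less)
  also have "\<dots> = rearr a b A $$ (i * 2 ^ b + j, r * q + s) * rearr c d B $$ (i' * 2 ^ d + j', r' * q' + s')"
    using rearr_index A B i j r s by simp
  also have "\<dots> = kron (rearr a b A) (rearr c d B) $$
           ((i * 2 ^ b + j) * (2 ^ c * 2 ^ d) + (i' * 2 ^ d + j'), (r * q + s) * (p' * q') + (r' * q' + s'))"
    using kron_index[of "i * 2 ^ b + j" "rearr a b A" "i' * 2 ^ d + j'" "rearr c d B" "r * q + s" "r' * q' + s'"]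
      rearr_carrier[OF A] rearr_carrier[OF B] i j r s
    by (simp add: mixed_radix_less carrier_matD)
  finally show ?thesis .
qed

lemma spec_norm_rearr_kron:
  assumes A: "A \<in> carrier_mat (2 ^ a * p) (2 ^ b * q)" and B: "B \<in> carrier_mat (2 ^ c * p') (2 ^ d * q')"
    and rows: "c = 0 \<or> p = 1" and cols: "d = 0 \<or> q = 1"
    and pos: "p > 0" "q > 0" "p' > 0" "q' > 0"
  shows "spec_norm (rearr (a + c) (b + d) (kron A B)) = spec_norm (rearr a b A) * spec_norm (rearr c d B)"
proof -
  have K: "kron A B \<in> carrier_mat (2 ^ (a + c) * (p * p')) (2 ^ (b + d) * (q * q'))"
    using kron_carrier[of A B] A B by (simp add: power_add mult_ac)
  have R: "rearr (a + c) (b + d) (kron A B) \<in> carrier_mat (2 ^ a * 2 ^ c * (2 ^ b * 2 ^ d)) (p * p' * (q * q'))"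
    using rearr_carrier[OF K] by (simp add: power_add)
  have RA: "rearr a b A \<in> carrier_mat (2 ^ a * 2 ^ b) (p * q)"
    and RB: "rearr c d B \<in> carrier_mat (2 ^ c * 2 ^ d) (p' * q')"
    using rearr_carrier A B by auto
  have "spec_norm (rearr (a + c) (b + d) (kron A B)) = spec_norm (kron (rearr a b A) (rearr c d B))"
  proof (rule spec_norm_reindex[OF R _ _ _ bij_swap_middle_digits bij_swap_middle_digits])
    show "kron (rearr a b A) (rearr c d B) \<in> carrier_mat (2 ^ a * 2 ^ b * (2 ^ c * 2 ^ d)) (p * q * (p' * q'))"
      using kron_carrier[of "rearr a b A" "rearr c d B"] RA RB by simp
    fix t u :: nat
    assume "t < 2 ^ a * 2 ^ c * (2 ^ b * 2 ^ d)" "u < p * p' * (q * q')"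
    then show "rearr (a + c) (b + d) (kron A B) $$ (t, u) = kron (rearr a b A) (rearr c d B) $$
      (swap_middle_digits (2 ^ b) (2 ^ c) (2 ^ d) t, swap_middle_digits q p' q' u)"
      by (elim mixed_radix_cases4) (simp add: swap_middle_digits rearr_kron_index[OF A B rows cols])
  qed (use pos in auto)
  also have "\<dots> = spec_norm (rearr a b A) * spec_norm (rearr c d B)"
    using RA RB pos by (intro spec_norm_kron) auto
  finally show ?thesis .
qed

theorem lemma1:
  fixes A B :: "real mat" and M N m n m' n' :: nat
  assumes "m \<le> M" and "n \<le> N"
    and "A \<in> carrier_mat (2 ^ m) (2 ^ n)"
    and "B \<in> carrier_mat (2 ^ (M - m)) (2 ^ (N - n))"
    and "m' \<le> M" and "n' \<le> N"
  shows "spec_norm (rearr m' n' (kron A B)) =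
         spec_norm (rearr (min m m') (min n n') A) * spec_norm (rearr (m' - m) (n' - n) B)"
proof -
  have split: "(2::nat) ^ k = 2 ^ k' * 2 ^ (k - k')" if "k' \<le> k" for k k' :: nat
    using that by (simp add: power_add[symmetric])
  have A: "A \<in> carrier_mat (2 ^ min m m' * 2 ^ (m - min m m')) (2 ^ min n n' * 2 ^ (n - min n n'))"
    using assms(3) split[of "min m m'" m] split[of "min n n'" n] by simp
  have B: "B \<in> carrier_mat (2 ^ (m' - m) * 2 ^ (M - m - (m' - m))) (2 ^ (n' - n) * 2 ^ (N - n - (n' - n)))"
    using assms(4-6) split[of "m' - m" "M - m"] split[of "n' - n" "N - n"] by simp
  have "m' = min m m' + (m' - m)" "n' = min n n' + (n' - n)" by auto
  moreover have "m' - m = 0 \<or> 2 ^ (m - min m m') = (1::nat)" "n' - n = 0 \<or> 2 ^ (n - min n n') = (1::nat)"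
    by auto
  ultimately show ?thesis
    using spec_norm_rearr_kron[OF A B] by simp
qed

end
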